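(* For every positive integer $n$, \[ \sum_{i=1}^{n}2^{\omega(i)}=\sum_{1\leq i^{2}\leq n}\mu(i)\,D_{2}\!\left(\left\lfloor\frac{n}{i^{2}}\right\rfloor\right)=2n-1+2\sum_{1<i^{2}<n}\left(\varphi\!\left(\left\lfloor\frac{n}{i}\right\rfloor,i\right)-\varphi(i)\right), \] where the sums on the right run over positive integers $i$ satisfying the indicated conditions.
   Context: $\omega(i)$ is the number of distinct prime divisors of $i$; $\mu$ is the Möbius function; $D_{2}(m)$ is the number of ordered pairs $(a,b)$ of positive integers with $ab\leq m$ (equivalently $D_{2}(m)=\sum_{j\leq m}\tau(j)$ with $\tau$ the number-of-divisors function); for real $x$ and positive integer $a$, $\varphi(x,a)$ is the number of positive integers not exceeding $x$ that are relatively prime to $a$, and $\varphi(a)=\varphi(a,a)$ is Euler's totient function. *)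

theory Defs
  imports "HOL-Number_Theory.Number_Theory" "HOL-Computational_Algebra.Squarefree"
begin

definition omega :: "nat \<Rightarrow> nat" where
  "omega i = card (prime_factors i)"

definition moebius :: "nat \<Rightarrow> int" where
  "moebius i = (if squarefree i then (-1) ^ card (prime_factors i) else 0)"

definition D2 :: "nat \<Rightarrow> nat" where
  "D2 m = card {(a :: nat, b :: nat). 0 < a \<and> 0 < b \<and> a * b \<le> m}"

definition phi :: "real \<Rightarrow> nat \<Rightarrow> nat" where
  "phi x a = card {k :: nat. 0 < k \<and> real k \<le> x \<and> coprime k a}"

end

theory Submission
  imports Defs
begin

text \<open>
  All three expressions count the coprime pairs (a, b) of positive integers with a b \<le> n.
  An integer i > 0 has exactly 2^\<omega>(i) factorisations i = a b into coprime factors, one for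
  each set of prime powers of i that is put into a; summing over i \<le> n gives the left-hand
  side. Detecting coprimality by the sum of \<mu>(d) over the common divisors d of a and b (all
  of which satisfy d^2 \<le> a b \<le> n) and counting the pairs divisible by d as D2(\<lfloor>n/d^2\<rfloor>)
  gives the second expression. For the third, (1, 1) is the only coprime pair on the
  diagonal, the pairs with a < b have a^2 < n, and for such a the admissible b are the
  integers in (a, \<lfloor>n/a\<rfloor>] coprime to a, of which there are \<phi>(\<lfloor>n/a\<rfloor>, a) - \<phi>(a).
\<close>

lemma prime_factors_prod_prime_powers:
  fixes S :: "nat set"
  assumes "finite S" "\<And>p. p \<in> S \<Longrightarrow> prime p" "\<And>p. p \<in> S \<Longrightarrow> e p > 0"
  shows "prime_factors (\<Prod>p\<in>S. p ^ e p) = S"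
  using multiplicity_prod_prime_powers[OF assms(1,2)] assms(2,3)
  by (auto simp: prime_factors_multiplicity split: if_splits)

lemma prime_factors_disjoint_if_coprime:
  fixes a b :: "'a :: factorial_semiring"
  assumes "coprime a b"
  shows "prime_factors a \<inter> prime_factors b = {}"
  using coprime_common_divisor[OF assms] by (auto dest: not_prime_unit)

lemma coprime_factor_eq_prod_prime_powers:
  fixes a b :: nat
  assumes "coprime a b" "a * b \<noteq> 0"
  shows "a = (\<Prod>p\<in>prime_factors a. p ^ multiplicity p (a * b))"
proof -
  have "multiplicity p (a * b) = multiplicity p a" if "p \<in> prime_factors a" for p
  proof -
    have "p \<notin> prime_factors b"
      using that prime_factors_disjoint_if_coprime[OF assms(1)] by blast
    with that assms(2) show ?thesis
      by (simp add: prime_elem_multiplicity_mult_distrib prime_factors_multiplicity)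
  qed
  then show ?thesis
    using prod_prime_factors[of a] assms(2) by simp
qed

lemma card_coprime_factorizations:
  fixes m :: nat
  assumes "m > 0"
  shows "card {(a, b). a * b = m \<and> coprime a b} = 2 ^ omega m"
proof -
  define P where "P = prime_factors m"
  define part where "part = (\<lambda>S. \<Prod>p\<in>S. p ^ multiplicity p m)"
  have finP: "finite P" and primeP: "\<And>p. p \<in> P \<Longrightarrow> prime p"
    and multP: "\<And>p. p \<in> P \<Longrightarrow> multiplicity p m > 0"
    unfolding P_def using prime_factors_multiplicity by auto
  have part_factors: "prime_factors (part S) = S" if "S \<subseteq> P" for S
    unfolding part_def
    using that finP primeP multP finite_subset by (intro prime_factors_prod_prime_powers) auto
  have "bij_betw (\<lambda>S. (part S, part (P - S))) (Pow P) {(a, b). a * b = m \<and> coprime a b}"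
  proof (rule bij_betw_byWitness[where f' = "\<lambda>(a, b). prime_factors a"])
    show "\<forall>S\<in>Pow P. (\<lambda>(a, b). prime_factors a) (part S, part (P - S)) = S"
      using part_factors by simp
    show "\<forall>x\<in>{(a, b). a * b = m \<and> coprime a b}.
            (\<lambda>S. (part S, part (P - S))) ((\<lambda>(a, b). prime_factors a) x) = x"
    proof
      fix x assume "x \<in> {(a, b). a * b = m \<and> coprime a b}"
      then obtain a b where x: "x = (a, b)" and ab: "m = a * b" "coprime a b"
        by auto
      have "prime_factors b = P - prime_factors a"
        using assms ab prime_factors_disjoint_if_coprime[OF ab(2)]
        by (auto simp: P_def prime_factors_product)
      moreover have "a = part (prime_factors a)" "b = part (prime_factors b)"
        using coprime_factor_eq_prod_prime_powers[of a b] coprime_factor_eq_prod_prime_powers[of b a]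
          ab assms by (simp_all add: part_def ac_simps)
      ultimately show "(\<lambda>S. (part S, part (P - S))) ((\<lambda>(a, b). prime_factors a) x) = x"
        using x by simp
    qed
    show "(\<lambda>S. (part S, part (P - S))) ` Pow P \<subseteq> {(a, b). a * b = m \<and> coprime a b}"
    proof safe
      fix S assume "S \<subseteq> P"
      have "part S * part (P - S) = part P"
        unfolding part_def using prod.subset_diff[OF \<open>S \<subseteq> P\<close> finP, of "\<lambda>p. p ^ multiplicity p m"]
        by (simp add: ac_simps)
      also have "\<dots> = m"
        using prod_prime_factors[of m] assms by (simp add: part_def P_def)
      finally show "part S * part (P - S) = m" .
      show "coprime (part S) (part (P - S))"
        unfolding part_def
      proof (intro prod_coprime_left prod_coprime_right)
        fix p q assume "p \<in> S" "q \<in> P - S"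
        then have "coprime p q"
          using \<open>S \<subseteq> P\<close> primeP by (intro primes_coprime) auto
        then show "coprime (p ^ multiplicity p m) (q ^ multiplicity q m)"
          by simp
      qed
    qed
    show "(\<lambda>(a, b). prime_factors a) ` {(a, b). a * b = m \<and> coprime a b} \<subseteq> Pow P"
      using assms by (auto simp: P_def prime_factors_product)
  qed
  then have "card {(a, b). a * b = m \<and> coprime a b} = card (Pow P)"
    by (simp add: bij_betw_same_card)
  then show ?thesis
    using finP by (simp add: card_Pow P_def omega_def)
qed

lemma sum_Pow_neg_one_power_card:
  assumes "finite P"
  shows "(\<Sum>X\<in>Pow P. (-1 :: 'a :: comm_ring_1) ^ card X) = (if P = {} then 1 else 0)"
proof -
  have "(\<Sum>X\<in>Pow P. (-1 :: 'a) ^ card X) = (\<Prod>x\<in>P. 1 - 1)"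
    using prod_diff_conv_sum[OF assms, of "\<lambda>_. 1 :: 'a" "\<lambda>_. 1"] by simp
  also have "\<dots> = (if P = {} then 1 else 0)"
    using assms by (simp add: power_0_left)
  finally show ?thesis .
qed

lemma prod_prime_factors_squarefree:
  fixes d :: nat
  assumes "squarefree d"
  shows "\<Prod>(prime_factors d) = d"
proof -
  have "d > 0"
    using assms by (auto intro: gr0I)
  then show ?thesis
    using prod_prime_factors[of d] assms squarefree_factorial_semiring'[of d]
    by (simp cong: prod.cong)
qed

lemma moebius_divisor_sum:
  fixes k :: nat
  assumes "k > 0"
  shows "(\<Sum>d | d dvd k. moebius d) = (if k = 1 then 1 else 0)"
proof -
  define P where "P = prime_factors k"
  have finP: "finite P" and primeP: "\<And>p. p \<in> P \<Longrightarrow> prime p"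
    unfolding P_def by auto
  have factors_prod: "prime_factors (\<Prod>S) = S" if "S \<subseteq> P" for S
    using prime_factors_prod_prime_powers[of S "\<lambda>_. 1"] that finP primeP
    by (simp add: finite_subset subset_iff)
  have "bij_betw prime_factors {d. d dvd k \<and> squarefree d} (Pow P)"
  proof (rule bij_betw_byWitness[where f' = "\<lambda>S. \<Prod>S"])
    show "\<forall>d\<in>{d. d dvd k \<and> squarefree d}. \<Prod>(prime_factors d) = d"
      by (simp add: prod_prime_factors_squarefree)
    show "\<forall>S\<in>Pow P. prime_factors (\<Prod>S) = S"
      using factors_prod by simp
    show "prime_factors ` {d. d dvd k \<and> squarefree d} \<subseteq> Pow P"
      using assms dvd_prime_factors[of k] by (auto simp: P_def)
    show "(\<lambda>S. \<Prod>S) ` Pow P \<subseteq> {d. d dvd k \<and> squarefree d}"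
    proof safe
      fix S assume "S \<subseteq> P"
      have nonzero: "\<Prod>S \<noteq> 0"
        using \<open>S \<subseteq> P\<close> finP primeP by (metis finite_subset not_prime_0 prod_zero_iff subsetD)
      have multiplicity_prod: "multiplicity p (\<Prod>S) = (if p \<in> S then 1 else 0)" if "prime p" for p
        using multiplicity_prod_prime_powers[of S p "\<lambda>_. 1"] that \<open>S \<subseteq> P\<close> finP primeP
        by (simp add: finite_subset subset_iff)
      show "\<Prod>S dvd k"
        using nonzero assms \<open>S \<subseteq> P\<close>
        by (intro multiplicity_le_imp_dvd)
           (auto simp: multiplicity_prod P_def prime_factors_multiplicity Suc_le_eq)
      show "squarefree (\<Prod>S)"
        using nonzero by (simp add: squarefree_factorial_semiring'' multiplicity_prod)
    qed
  qed
  have "(\<Sum>d | d dvd k. moebius d) = (\<Sum>d | d dvd k \<and> squarefree d. (-1) ^ card (prime_factors d))"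
    using assms by (intro sum.mono_neutral_cong_right) (auto simp: moebius_def)
  also have "\<dots> = (\<Sum>S\<in>Pow P. (-1) ^ card S)"
    by (rule sum.reindex_bij_betw) fact
  also have "\<dots> = (if k = 1 then 1 else 0)"
    using assms by (simp add: sum_Pow_neg_one_power_card finP P_def prime_factorization_empty_iff)
  finally show ?thesis .
qed

definition hyperbola_points :: "nat \<Rightarrow> (nat \<times> nat) set" where
  "hyperbola_points n = {(a, b). 0 < a \<and> 0 < b \<and> a * b \<le> n}"

lemma D2_eq_card_hyperbola_points: "D2 m = card (hyperbola_points m)"
  by (simp add: D2_def hyperbola_points_def)

lemma finite_hyperbola_points [simp]: "finite (hyperbola_points n)"
proof (rule finite_subset[of _ "{..n} \<times> {..n}"])
  show "hyperbola_points n \<subseteq> {..n} \<times> {..n}"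
  proof (clarsimp simp: hyperbola_points_def)
    fix a b :: nat
    assume "0 < a" "0 < b" "a * b \<le> n"
    moreover have "a \<le> a * b" "b \<le> a * b"
      using \<open>0 < a\<close> \<open>0 < b\<close> by simp_all
    ultimately show "a \<le> n \<and> b \<le> n"
      by linarith
  qed
qed simp

lemma sum_two_pow_omega_eq_card_coprime_points:
  "(\<Sum>i=1..n. 2 ^ omega i) = card {(a, b) \<in> hyperbola_points n. coprime a b}"
proof -
  define F where "F = (\<lambda>i :: nat. {(a, b). a * b = i \<and> coprime a b})"
  have "finite (F i)" if "i > 0" for i
    using that by (intro finite_subset[OF _ finite_hyperbola_points[of i]])
      (auto simp: F_def hyperbola_points_def)
  then have "(\<Sum>i=1..n. 2 ^ omega i) = card (\<Union>i\<in>{1..n}. F i)"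
    by (subst card_UN_disjoint) (auto simp: F_def card_coprime_factorizations)
  also have "(\<Union>i\<in>{1..n}. F i) = {(a, b) \<in> hyperbola_points n. coprime a b}"
    by (auto simp: F_def hyperbola_points_def)
  finally show ?thesis .
qed

lemma card_hyperbola_points_div_square:
  fixes d :: nat
  assumes "d > 0"
  shows "card (hyperbola_points (n div d^2))
           = card {(a, b) \<in> hyperbola_points n. d dvd a \<and> d dvd b}"
proof -
  have le_div_iff: "a * b \<le> n div d^2 \<longleftrightarrow> (d * a) * (d * b) \<le> n" for a b
    using assms by (simp add: less_eq_div_iff_mult_less_eq power2_eq_square ac_simps)
  have "(\<lambda>(a, b). (d * a, d * b)) ` hyperbola_points (n div d^2)
          = {(a, b) \<in> hyperbola_points n. d dvd a \<and> d dvd b}"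
  proof (rule equalityI; clarify)
    fix a b assume "(a, b) \<in> hyperbola_points n" "d dvd a" "d dvd b"
    then obtain a' b' where "a = d * a'" "b = d * b'" "(a', b') \<in> hyperbola_points (n div d^2)"
      using assms by (auto simp: hyperbola_points_def le_div_iff elim!: dvdE)
    then show "(a, b) \<in> (\<lambda>(a, b). (d * a, d * b)) ` hyperbola_points (n div d^2)"
      by (intro image_eqI[where x = "(a', b')"]) simp_all
  qed (use assms in \<open>auto simp: hyperbola_points_def le_div_iff\<close>)
  moreover have "inj_on (\<lambda>(a, b). (d * a, d * b)) (hyperbola_points (n div d^2))"
    using assms by (auto simp: inj_on_def)
  ultimately show ?thesis
    by (simp flip: card_image)
qed

lemma finite_squares_le: "finite {i :: nat. i^2 \<le> n}"
  by (rule finite_subset[of _ "{..n}"]) (auto intro: order.trans[OF power2_nat_le_imp_le])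

lemma card_coprime_points_moebius:
  "int (card {(a, b) \<in> hyperbola_points n. coprime a b})
     = (\<Sum>i\<in>{i::nat. 1 \<le> i^2 \<and> i^2 \<le> n}. moebius i * int (D2 (n div i^2)))"
proof -
  define H where "H = hyperbola_points n"
  define I where "I = {i::nat. 1 \<le> i^2 \<and> i^2 \<le> n}"
  have finI: "finite I"
    using finite_squares_le[of n] by (simp add: I_def finite_subset)
  have divisors_in_I: "{d. d dvd gcd a b} \<subseteq> I" if "(a, b) \<in> H" for a b
  proof safe
    fix d assume "d dvd gcd a b"
    then have "d \<le> a" "d \<le> b" "0 < d"
      using that by (auto simp: H_def hyperbola_points_def intro: dvd_imp_le gr0I)
    then have "d * d \<le> a * b"
      by (simp add: mult_le_mono)
    then show "d \<in> I"
      using that \<open>0 < d\<close> by (auto simp: H_def I_def hyperbola_points_def power2_eq_square)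
  qed
  have "(\<Sum>i\<in>I. moebius i * int (D2 (n div i^2)))
      = (\<Sum>i\<in>I. moebius i * (\<Sum>(a, b)\<in>H. if i dvd a \<and> i dvd b then 1 else 0))"
  proof (rule sum.cong[OF refl])
    fix i assume "i \<in> I"
    then have "0 < i"
      by (auto simp: I_def intro: gr0I)
    then show "moebius i * int (D2 (n div i^2))
               = moebius i * (\<Sum>(a, b)\<in>H. if i dvd a \<and> i dvd b then 1 else 0)"
      by (simp add: D2_eq_card_hyperbola_points card_hyperbola_points_div_square H_def
            sum.If_cases Int_def case_prod_unfold)
  qed
  also have "\<dots> = (\<Sum>(a, b)\<in>H. \<Sum>i\<in>I. if i dvd gcd a b then moebius i else 0)"
    by (simp add: sum_distrib_left if_distrib sum.swap[of _ I] case_prod_unfold cong: if_cong)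
  also have "\<dots> = (\<Sum>(a, b)\<in>H. \<Sum>i | i dvd gcd a b. moebius i)"
  proof (rule sum.cong[OF refl], clarify)
    fix a b assume "(a, b) \<in> H"
    then have "{i \<in> I. i dvd gcd a b} = {i. i dvd gcd a b}"
      using divisors_in_I by blast
    then show "(\<Sum>i\<in>I. if i dvd gcd a b then moebius i else 0) = (\<Sum>i | i dvd gcd a b. moebius i)"
      using sum.inter_filter[OF finI, of moebius "\<lambda>i. i dvd gcd a b"] by simp
  qed
  also have "\<dots> = (\<Sum>(a, b)\<in>H. if coprime a b then 1 else 0)"
  proof (rule sum.cong[OF refl], clarify)
    fix a b assume "(a, b) \<in> H"
    then have "gcd a b > 0"
      by (simp add: H_def hyperbola_points_def)
    then show "(\<Sum>i | i dvd gcd a b. moebius i) = (if coprime a b then 1 else 0)"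
      by (simp only: moebius_divisor_sum coprime_iff_gcd_eq_1)
  qed
  also have "\<dots> = int (card {(a, b) \<in> H. coprime a b})"
    by (simp add: H_def sum.If_cases Int_def case_prod_unfold)
  finally show ?thesis
    by (simp add: H_def I_def)
qed

lemma phi_of_nat_eq_totient_plus_card:
  fixes a x :: nat
  assumes "a \<le> x"
  shows "phi (real x) a = totient a + card {k. a < k \<and> k \<le> x \<and> coprime k a}"
proof -
  have "{k. 0 < k \<and> real k \<le> real x \<and> coprime k a}
          = totatives a \<union> {k. a < k \<and> k \<le> x \<and> coprime k a}"
    using assms by (auto simp: totatives_def)
  moreover have "totatives a \<inter> {k. a < k \<and> k \<le> x \<and> coprime k a} = {}"
    by (auto simp: totatives_def)
  ultimately show ?thesis
    by (simp add: phi_def totient_def card_Un_disjoint)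
qed

lemma swap_in_hyperbola_points_iff [simp]:
  "(b, a) \<in> hyperbola_points n \<longleftrightarrow> (a, b) \<in> hyperbola_points n"
  by (auto simp: hyperbola_points_def mult.commute)

lemma card_coprime_points_by_symmetry:
  assumes "n > 0"
  shows "card {(a, b) \<in> hyperbola_points n. coprime a b}
           = 1 + 2 * card {(a, b) \<in> hyperbola_points n. coprime a b \<and> a < b}"
proof -
  define L where "L = {(a, b) \<in> hyperbola_points n. coprime a b \<and> a < b}"
  have "{(a, b) \<in> hyperbola_points n. coprime a b} = insert (1, 1) (L \<union> prod.swap ` L)"
  proof (intro equalityI subsetI)
    fix x assume "x \<in> {(a, b) \<in> hyperbola_points n. coprime a b}"
    then obtain a b where x: "x = (a, b)" "(a, b) \<in> hyperbola_points n" "coprime a b"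
      by auto
    consider "a < b" | "a = b" | "b < a"
      by linarith
    then show "x \<in> insert (1, 1) (L \<union> prod.swap ` L)"
    proof cases
      case 3
      then have "(b, a) \<in> L"
        using x by (simp add: L_def coprime_commute)
      then show ?thesis
        using x by (auto intro: image_eqI[where x = "(b, a)"])
    qed (use x in \<open>auto simp: L_def\<close>)
  qed (use assms in \<open>auto simp: L_def hyperbola_points_def coprime_commute mult.commute\<close>)
  moreover have "finite L"
    by (rule finite_subset[OF _ finite_hyperbola_points]) (auto simp: L_def)
  moreover have "L \<inter> prod.swap ` L = {}" "(1, 1) \<notin> L \<union> prod.swap ` L"
    by (auto simp: L_def)
  ultimately show ?thesis
    by (simp add: card_Un_disjoint card_image L_def)
qed

lemma coprime_points_above_diagonal_eq_Sigma:
  "{(a, b) \<in> hyperbola_points n. coprime a b \<and> a < b}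
     = Sigma (insert 1 {i. 1 < i^2 \<and> i^2 < n}) (\<lambda>a. {b. a < b \<and> b \<le> n div a \<and> coprime b a})"
proof (intro equalityI subsetI)
  fix x assume "x \<in> {(a, b) \<in> hyperbola_points n. coprime a b \<and> a < b}"
  then obtain a b where x: "x = (a, b)" and "0 < a" "a < b" "a * b \<le> n" "coprime b a"
    by (auto simp: hyperbola_points_def coprime_commute)
  then have "b \<le> n div a"
    by (simp add: less_eq_div_iff_mult_less_eq mult.commute)
  moreover have "1 < a^2 \<and> a^2 < n" if "a \<noteq> 1"
  proof
    have "a * a < a * b"
      using \<open>0 < a\<close> \<open>a < b\<close> by simp
    then show "a^2 < n"
      using \<open>a * b \<le> n\<close> unfolding power2_eq_square by linarith
    show "1 < a^2"
      using that \<open>0 < a\<close> by (intro one_less_power) auto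
  qed
  ultimately show "x \<in> Sigma (insert 1 {i. 1 < i^2 \<and> i^2 < n}) (\<lambda>a. {b. a < b \<and> b \<le> n div a \<and> coprime b a})"
    using x \<open>a < b\<close> \<open>coprime b a\<close> by auto
next
  fix x assume "x \<in> Sigma (insert 1 {i. 1 < i^2 \<and> i^2 < n}) (\<lambda>a. {b. a < b \<and> b \<le> n div a \<and> coprime b a})"
  then obtain a b where x: "x = (a, b)" and "a \<in> insert 1 {i. 1 < i^2 \<and> i^2 < n}"
    and "a < b" "b \<le> n div a" "coprime b a"
    by auto
  moreover from this have "0 < a"
    by (auto intro: gr0I)
  ultimately show "x \<in> {(a, b) \<in> hyperbola_points n. coprime a b \<and> a < b}"
    by (auto simp: hyperbola_points_def less_eq_div_iff_mult_less_eq coprime_commute mult.commute)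
qed

lemma card_coprime_points_above_diagonal:
  "card {(a, b) \<in> hyperbola_points n. coprime a b \<and> a < b}
     = (n - 1) + (\<Sum>a\<in>{i. 1 < i^2 \<and> i^2 < n}. card {b. a < b \<and> b \<le> n div a \<and> coprime b a})"
proof -
  define I where "I = {i::nat. 1 < i^2 \<and> i^2 < n}"
  define B where "B = (\<lambda>a. {b. a < b \<and> b \<le> n div a \<and> coprime b a})"
  have "finite I"
    by (rule finite_subset[OF _ finite_squares_le[of n]]) (auto simp: I_def)
  have "1 \<notin> I"
    by (simp add: I_def)
  have "B 1 = {1<..n}"
    by (auto simp: B_def)
  have "card {(a, b) \<in> hyperbola_points n. coprime a b \<and> a < b} = card (Sigma (insert 1 I) B)"
    by (simp add: coprime_points_above_diagonal_eq_Sigma I_def B_def)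
  also have "\<dots> = (\<Sum>a\<in>insert 1 I. card (B a))"
    using \<open>finite I\<close> by (simp add: card_SigmaI B_def)
  also have "\<dots> = (n - 1) + (\<Sum>a\<in>I. card (B a))"
    unfolding sum.insert[OF \<open>finite I\<close> \<open>1 \<notin> I\<close>] \<open>B 1 = {1<..n}\<close> by simp
  finally show ?thesis
    by (simp add: I_def B_def)
qed

lemma card_coprime_points_totient:
  assumes "n > 0"
  shows "int (card {(a, b) \<in> hyperbola_points n. coprime a b})
           = 2 * int n - 1 + 2 * (\<Sum>i\<in>{i::nat. 1 < i^2 \<and> i^2 < n}.
                 (int (phi (real_of_int \<lfloor>real n / real i\<rfloor>) i) - int (totient i)))"
proof -
  have "int (card {b. i < b \<and> b \<le> n div i \<and> coprime b i})
          = int (phi (real_of_int \<lfloor>real n / real i\<rfloor>) i) - int (totient i)"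
    if "1 < i^2 \<and> i^2 < n" for i
  proof -
    have "0 < i" "i * i < n"
      using that by (auto simp: power2_eq_square intro: gr0I)
    then have "i \<le> n div i"
      by (simp add: less_eq_div_iff_mult_less_eq)
    then show ?thesis
      by (simp add: floor_divide_of_nat_eq phi_of_nat_eq_totient_plus_card)
  qed
  then have "int (\<Sum>a\<in>{i. 1 < i^2 \<and> i^2 < n}. card {b. a < b \<and> b \<le> n div a \<and> coprime b a})
      = (\<Sum>i\<in>{i::nat. 1 < i^2 \<and> i^2 < n}.
           int (phi (real_of_int \<lfloor>real n / real i\<rfloor>) i) - int (totient i))"
    unfolding of_nat_sum by (intro sum.cong) auto
  then show ?thesis
    using card_coprime_points_by_symmetry[OF assms] card_coprime_points_above_diagonal[of n] assms
    by (simp add: of_nat_diff)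
qed

theorem mainTheorem5:
  fixes n :: nat
  assumes "n > 0"
  shows "int (\<Sum>i=1..n. 2 ^ omega i)
           = (\<Sum>i\<in>{i::nat. 1 \<le> i^2 \<and> i^2 \<le> n}. moebius i * int (D2 (n div i^2)))
       \<and> int (\<Sum>i=1..n. 2 ^ omega i)
           = 2 * int n - 1 + 2 * (\<Sum>i\<in>{i::nat. 1 < i^2 \<and> i^2 < n}.
                 (int (phi (real_of_int \<lfloor>real n / real i\<rfloor>) i) - int (totient i)))"
  using sum_two_pow_omega_eq_card_coprime_points[of n] card_coprime_points_moebius[of n]
    card_coprime_points_totient[OF assms]
  by simp

end
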